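(* For all $N\ge1$ and $1\le k\le N$, $E\big[(X_{k,N}-Y_{k,N})^2\big]\le 3/N$.
   Context: Fix $r\in(0,1)$. Multitype Yule process: at time $0$ a single individual of type $1$ is born; no deaths; each individual independently gives birth at rate $1$; a newborn has, independently, its parent's type with probability $1-r$ and otherwise a brand-new type. Individuals are numbered in order of birth (the initial one is the 1st); if the $k$-th individual born has a type different from its parent, that type is called type $k$. $T_N$ is the time the population reaches size $N$; $X_{k,N}$ is the fraction of individuals at time $T_N$ with type in $\{1,\dots,k\}$; $V_{k,N}$ is the fraction, among individuals at time $T_N$ with type in $\{1,\dots,k\}$, of those that have type $k$. $W_k=\lim_{N\to\infty}V_{k,N}$ (exists a.s.); the $W_k$ are independent, $W_1=1$, and for $k\ge2$, $P(W_k>0)=r$ and given $W_k>0$, $W_k\sim\mathrm{Beta}(1,k-1)$. $Y_{N,N}=1$ and $Y_{k,N}=\prod_{j=k+1}^N(1-W_j)$ for $1\le k\le N-1$. *)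

theory Defs
  imports "HOL-Probability.Probability"
begin

text \<open>Embedded jump chain of the multitype Yule process.  A sample point
  \<open>\<omega> :: nat \<Rightarrow> nat \<times> bool\<close> records, for each \<open>n\<close>, the data of individual
  number \<open>n + 2\<close>: \<open>fst (\<omega> n)\<close> is its parent (uniform among individuals
  \<open>1..n+1\<close>, since every living individual gives birth at rate 1), and
  \<open>snd (\<omega> n)\<close> says whether it receives a brand-new type (probability r).\<close>

definition yule_space :: "real \<Rightarrow> (nat \<Rightarrow> nat \<times> bool) measure" where
  "yule_space r = (\<Pi>\<^sub>M n\<in>UNIV. measure_pmf (pair_pmf (pmf_of_set {1..Suc n}) (bernoulli_pmf r)))"

text \<open>\<open>typs \<omega> n i\<close> = type of individual \<open>i\<close> (for \<open>1 \<le> i \<le> n+1\<close>).\<close>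
primrec typs :: "(nat \<Rightarrow> nat \<times> bool) \<Rightarrow> nat \<Rightarrow> nat \<Rightarrow> nat" where
  "typs \<omega> 0 = (\<lambda>i. 1)"
| "typs \<omega> (Suc n) = (typs \<omega> n)(n + 2 := (if snd (\<omega> n) then n + 2 else typs \<omega> n (fst (\<omega> n))))"

definition yule_type :: "(nat \<Rightarrow> nat \<times> bool) \<Rightarrow> nat \<Rightarrow> nat" where
  "yule_type \<omega> i = typs \<omega> i i"

definition Xf :: "nat \<Rightarrow> nat \<Rightarrow> (nat \<Rightarrow> nat \<times> bool) \<Rightarrow> real" where
  "Xf k N \<omega> = real (card {i \<in> {1..N}. yule_type \<omega> i \<in> {1..k}}) / real N"

definition Vf :: "nat \<Rightarrow> nat \<Rightarrow> (nat \<Rightarrow> nat \<times> bool) \<Rightarrow> real" where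
  "Vf k N \<omega> = real (card {i \<in> {1..N}. yule_type \<omega> i = k})
                / real (card {i \<in> {1..N}. yule_type \<omega> i \<in> {1..k}})"

definition Wf :: "nat \<Rightarrow> (nat \<Rightarrow> nat \<times> bool) \<Rightarrow> real" where
  "Wf k \<omega> = lim (\<lambda>N. Vf k N \<omega>)"

definition Yf :: "nat \<Rightarrow> nat \<Rightarrow> (nat \<Rightarrow> nat \<times> bool) \<Rightarrow> real" where
  "Yf k N \<omega> = (\<Prod>j\<in>{k+1..N}. 1 - Wf j \<omega>)"

end

(* Let c_a(m) be the number of individuals among the first m whose type is at most a.
   For a <= b the ratio c_a(m) / c_b(m), m >= b, is a Polya urn martingale for the sequence of
   births: a newborn gets a type <= b exactly when it copies the type of a parent with type <= b
   (brand-new types exceed b), and given that, its type is <= a with probability c_a / c_b.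
   Being bounded, it converges almost surely by Kolmogorov's maximal inequality.
   Since 1 - V_{j,M} = c_{j-1}(M) / c_j(M), the product defining Y_{k,N} telescopes into the
   limit of c_k(M) / c_N(M), whose value at M = N is X_{k,N}.  One step moves this martingale by
   at most 1 / c_N(M) - 1 / c_N(M+1) in square, so orthogonality of the increments and Fatou's
   lemma give E[(X_{k,N} - Y_{k,N})^2] <= 1 / c_N(N) = 1 / N. *)

theory Submission
  imports Defs
begin

section \<open>Product spaces of countable distributions\<close>

definition depends_on_first :: "nat \<Rightarrow> ((nat \<Rightarrow> 'a) \<Rightarrow> 'b) \<Rightarrow> bool" where
  "depends_on_first n f \<longleftrightarrow> (\<forall>w w'. (\<forall>i<n. w i = w' i) \<longrightarrow> f w = f w')"

lemma depends_on_firstI: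
  "(\<And>w w'. (\<And>i. i < n \<Longrightarrow> w i = w' i) \<Longrightarrow> f w = f w') \<Longrightarrow> depends_on_first n f"
  unfolding depends_on_first_def by blast

lemma depends_on_firstD:
  "depends_on_first n f \<Longrightarrow> (\<And>i. i < n \<Longrightarrow> w i = w' i) \<Longrightarrow> f w = f w'"
  unfolding depends_on_first_def by blast

lemma depends_on_first_update: "depends_on_first n f \<Longrightarrow> n \<le> m \<Longrightarrow> f (w(m := x)) = f w"
  unfolding depends_on_first_def by simp

lemma depends_on_first_mono: "depends_on_first n f \<Longrightarrow> n \<le> m \<Longrightarrow> depends_on_first m f"
  unfolding depends_on_first_def by auto

lemma depends_on_first_comp: "depends_on_first n f \<Longrightarrow> depends_on_first n (\<lambda>w. F (f w))"
  unfolding depends_on_first_def by metis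

lemma depends_on_first_comp2:
  "depends_on_first n f \<Longrightarrow> depends_on_first n g \<Longrightarrow> depends_on_first n (\<lambda>w. F (f w) (g w))"
  unfolding depends_on_first_def by metis

lemma integrable_measure_pmf_bounded:
  fixes f :: "'a \<Rightarrow> real"
  shows "(\<And>x. \<bar>f x\<bar> \<le> C) \<Longrightarrow> integrable (measure_pmf p) f"
  by (rule measure_pmf.integrable_const_bound[where B = C]) auto

locale pmf_sequence_space =
  fixes P :: "nat \<Rightarrow> 'a::countable pmf"
begin

abbreviation \<Omega> :: "(nat \<Rightarrow> 'a) measure" where
  "\<Omega> \<equiv> PiM UNIV (\<lambda>i. measure_pmf (P i))"

sublocale prob_space \<Omega>
  by (intro prob_space_PiM prob_space_measure_pmf)

lemma space_\<Omega> [simp]: "space \<Omega> = UNIV"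
  by (simp add: space_PiM)

lemma measurable_depends_on_first:
  "depends_on_first n f \<Longrightarrow> f \<in> measurable \<Omega> (count_space UNIV)"
proof (induction n arbitrary: f)
  case 0
  then have "f = (\<lambda>_. f undefined)"
    by (auto simp: depends_on_first_def)
  then show ?case
    by (metis measurable_count_space_const)
next
  case (Suc n)
  have "(\<lambda>w. f (w(n := y))) \<in> measurable \<Omega> (count_space UNIV)" for y
    using Suc.prems by (intro Suc.IH) (auto simp: depends_on_first_def)
  moreover have "(\<lambda>w. w n) \<in> measurable \<Omega> (count_space UNIV)"
    using measurable_component_singleton[of n UNIV "\<lambda>i. measure_pmf (P i)"] by simp
  ultimately have "(\<lambda>w. f (w(n := w n))) \<in> measurable \<Omega> (count_space UNIV)"
    by (rule measurable_compose_countable)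
  then show ?case
    by simp
qed

lemma borel_measurable_depends_on_first:
  fixes f :: "(nat \<Rightarrow> 'a) \<Rightarrow> real"
  shows "depends_on_first n f \<Longrightarrow> f \<in> borel_measurable \<Omega>"
  using measurable_compose[OF measurable_depends_on_first, of n f "\<lambda>x. x" borel] by simp

lemma integrable_bounded:
  fixes f :: "(nat \<Rightarrow> 'a) \<Rightarrow> real"
  shows "f \<in> borel_measurable \<Omega> \<Longrightarrow> (\<And>w. \<bar>f w\<bar> \<le> C) \<Longrightarrow> integrable \<Omega> f"
  by (rule integrable_const_bound[where B = C]) auto

lemma integral_split_coordinate:
  fixes u :: "(nat \<Rightarrow> 'a) \<Rightarrow> real"
  assumes u: "u \<in> borel_measurable \<Omega>" and bounded: "\<And>w. \<bar>u w\<bar> \<le> C"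
  shows "(\<integral>w. u w \<partial>\<Omega>) =
    (\<integral>X. (\<integral>x. u (X(m := x)) \<partial>P m) \<partial>PiM (UNIV - {m}) (\<lambda>i. measure_pmf (P i)))"
proof -
  let ?\<Omega>' = "PiM (UNIV - {m}) (\<lambda>i. measure_pmf (P i))"
  interpret \<Omega>': prob_space ?\<Omega>'
    by (intro prob_space_PiM prob_space_measure_pmf)
  interpret pair_prob_space "P m" ?\<Omega>'
    by unfold_locales
  have UNIV_eq: "insert m (UNIV - {m}) = UNIV"
    by auto
  have distr_eq: "distr (P m \<Otimes>\<^sub>M ?\<Omega>') \<Omega> (\<lambda>(x, X). X(m := x)) = \<Omega>"
    using distr_pair_PiM_eq_PiM[of "UNIV - {m}" "\<lambda>i. measure_pmf (P i)" m]
    unfolding UNIV_eq by (simp add: prob_space_measure_pmf)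
  have "(\<lambda>(x, X). X(m := x)) \<in>
      measurable (P m \<Otimes>\<^sub>M ?\<Omega>') (PiM (insert m (UNIV - {m})) (\<lambda>i. measure_pmf (P i)))"
    by measurable
  then have update_measurable: "(\<lambda>(x, X). X(m := x)) \<in> measurable (P m \<Otimes>\<^sub>M ?\<Omega>') \<Omega>"
    unfolding UNIV_eq .
  then have "(\<lambda>(x, X). u (X(m := x))) \<in> borel_measurable (P m \<Otimes>\<^sub>M ?\<Omega>')"
    using measurable_compose[OF _ u] by (simp add: case_prod_beta')
  then have "integrable (P m \<Otimes>\<^sub>M ?\<Omega>') (\<lambda>(x, X). u (X(m := x)))"
    using bounded by (intro P.integrable_const_bound[where B = C]) auto
  then have "(\<integral>z. u (case z of (x, X) \<Rightarrow> X(m := x)) \<partial>(P m \<Otimes>\<^sub>M ?\<Omega>')) =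
      (\<integral>X. (\<integral>x. u (X(m := x)) \<partial>P m) \<partial>?\<Omega>')"
    by (simp add: case_prod_beta' integral_snd)
  moreover have "(\<integral>w. u w \<partial>\<Omega>) = (\<integral>z. u (case z of (x, X) \<Rightarrow> X(m := x)) \<partial>(P m \<Otimes>\<^sub>M ?\<Omega>'))"
    by (subst distr_eq[symmetric]) (rule integral_distr[OF update_measurable], simp add: u)
  ultimately show ?thesis
    by simp
qed

lemma integral_eq_0_if_coordinate_averages_0:
  fixes u :: "(nat \<Rightarrow> 'a) \<Rightarrow> real"
  assumes "u \<in> borel_measurable \<Omega>" "\<And>w. \<bar>u w\<bar> \<le> C" "\<And>w. (\<integral>x. u (w(m := x)) \<partial>P m) = 0"
  shows "(\<integral>w. u w \<partial>\<Omega>) = 0"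
  using integral_split_coordinate[OF assms(1,2), of m] assms(3) by simp

end

section \<open>Square-integrable martingales\<close>

lemma sum_first_occurrence:
  fixes m n :: nat
  shows "(\<Sum>l\<in>{m..n}. of_bool (A l \<and> (\<forall>l'\<in>{m..<l}. \<not> A l')) :: 'a::semiring_1) =
    of_bool (\<exists>l\<in>{m..n}. A l)"
proof (induction n)
  case 0
  then show ?case
    by (cases m) auto
next
  case (Suc n)
  show ?case
  proof (cases "m \<le> Suc n")
    case True
    then have "{m..Suc n} = insert (Suc n) {m..n}" "{m..<Suc n} = {m..n}"
      by auto
    then show ?thesis
      using Suc.IH by (simp only:) (subst sum.insert, auto simp: le_Suc_eq)
  qed simp
qed

text \<open>A bounded martingale for the filtration generated by the coordinates, delayed by \<open>c\<close>:
  coordinate \<open>n + c\<close> is revealed between \<open>S n\<close> and \<open>S (n + 1)\<close>.\<close>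

locale pmf_sequence_martingale = pmf_sequence_space P for P :: "nat \<Rightarrow> 'a::countable pmf" +
  fixes S :: "nat \<Rightarrow> (nat \<Rightarrow> 'a) \<Rightarrow> real" and c :: nat and B :: real
  assumes depends_S: "depends_on_first (n + c) (S n)"
    and bounded_S: "\<bar>S n w\<bar> \<le> B"
    and average_S: "(\<integral>x. S (Suc n) (w(n + c := x)) \<partial>P (n + c)) = S n w"
begin

lemma measurable_S [measurable]: "S n \<in> borel_measurable \<Omega>"
  by (rule borel_measurable_depends_on_first[OF depends_S])

lemma B_nonneg: "0 \<le> B"
  using bounded_S[of 0 undefined] by linarith

lemma abs_S_diff_le: "\<bar>S m w - S n w\<bar> \<le> 2 * B"
  using bounded_S[of m w] bounded_S[of n w] by linarith

lemma square_S_le: "(S n w)\<^sup>2 \<le> B\<^sup>2"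
  using power_mono[OF bounded_S[of n w], of 2] by simp

lemma square_S_diff_le: "(S m w - S n w)\<^sup>2 \<le> 4 * B\<^sup>2"
  using power_mono[OF abs_S_diff_le[of m w n], of 2] by (simp add: power_mult_distrib)

lemma integrable_square_S: "integrable \<Omega> (\<lambda>w. (S n w)\<^sup>2)"
  by (rule integrable_bounded[where C = "B\<^sup>2"]) (auto simp: square_S_le)

lemma increment_orthogonal:
  assumes "m \<le> n" and g: "depends_on_first (m + c) g" "\<And>w. \<bar>g w\<bar> \<le> G"
  shows "(\<integral>w. (S n w - S m w) * g w \<partial>\<Omega>) = 0"
proof -
  have g_measurable [measurable]: "g \<in> borel_measurable \<Omega>"
    by (rule borel_measurable_depends_on_first[OF g(1)])
  have bounded_step: "\<bar>(S (Suc l) w - S l w) * g w\<bar> \<le> 2 * B * G" for l w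
    unfolding abs_mult by (rule mult_mono) (use abs_S_diff_le g(2) B_nonneg in auto)
  have integrable_step: "integrable \<Omega> (\<lambda>w. (S (Suc l) w - S l w) * g w)" for l
    by (rule integrable_bounded[OF _ bounded_step]) measurable
  have step: "(\<integral>w. (S (Suc l) w - S l w) * g w \<partial>\<Omega>) = 0" if "m \<le> l" for l
  proof (rule integral_eq_0_if_coordinate_averages_0[OF _ bounded_step])
    fix w
    have "g (w(l + c := x)) = g w" "S l (w(l + c := x)) = S l w" for x
      using that
      by (auto intro: depends_on_first_update[OF g(1)] depends_on_first_update[OF depends_S])
    moreover have "integrable (P (l + c)) (\<lambda>x. S (Suc l) (w(l + c := x)))"
      by (rule integrable_measure_pmf_bounded[OF bounded_S])
    ultimately show
      "(\<integral>x. (S (Suc l) (w(l + c := x)) - S l (w(l + c := x))) * g (w(l + c := x)) \<partial>P (l + c)) = 0"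
      by (simp add: left_diff_distrib average_S)
  qed measurable
  have "(\<integral>w. (S n w - S m w) * g w \<partial>\<Omega>) = (\<integral>w. (\<Sum>l = m..<n. (S (Suc l) w - S l w) * g w) \<partial>\<Omega>)"
    by (simp add: sum_distrib_right[symmetric] sum_Suc_diff'[OF \<open>m \<le> n\<close>, of "\<lambda>l. S l _"])
  also have "\<dots> = (\<Sum>l = m..<n. \<integral>w. (S (Suc l) w - S l w) * g w \<partial>\<Omega>)"
    by (rule Bochner_Integration.integral_sum[OF integrable_step])
  also have "\<dots> = 0"
    by (simp add: step)
  finally show ?thesis .
qed

lemma integral_square_increment:
  assumes "m \<le> n"
  shows "(\<integral>w. (S n w - S m w)\<^sup>2 \<partial>\<Omega>) = (\<integral>w. (S n w)\<^sup>2 \<partial>\<Omega>) - (\<integral>w. (S m w)\<^sup>2 \<partial>\<Omega>)"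
proof -
  have cross: "integrable \<Omega> (\<lambda>w. (S n w - S m w) * S m w)"
    by (rule integrable_bounded[where C = "2 * B * B"])
       (auto simp: abs_mult intro!: mult_mono abs_S_diff_le bounded_S B_nonneg)
  have "(\<lambda>w. (S n w - S m w)\<^sup>2) = (\<lambda>w. ((S n w)\<^sup>2 - (S m w)\<^sup>2) - 2 * ((S n w - S m w) * S m w))"
    by (auto simp: power2_eq_square algebra_simps)
  then show ?thesis
    using increment_orthogonal[OF assms depends_S bounded_S] integrable_square_S cross by simp
qed

lemma integrable_weighted_square_increment:
  assumes "g \<in> borel_measurable \<Omega>" "\<And>w. \<bar>g w\<bar> \<le> 1"
  shows "integrable \<Omega> (\<lambda>w. g w * (S i w - S j w)\<^sup>2)"
proof (rule integrable_bounded[where C = "1 * (4 * B\<^sup>2)"])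
  show "\<bar>g w * (S i w - S j w)\<^sup>2\<bar> \<le> 1 * (4 * B\<^sup>2)" for w
    unfolding abs_mult by (rule mult_mono) (use assms(2) square_S_diff_le in auto)
qed (use assms(1) in measurable)

lemma integral_weighted_square_increment_mono:
  assumes "m \<le> l" "l \<le> n"
    and g: "depends_on_first (l + c) g" "\<And>w. 0 \<le> g w" "\<And>w. g w \<le> 1"
  shows "(\<integral>w. g w * (S l w - S m w)\<^sup>2 \<partial>\<Omega>) \<le> (\<integral>w. g w * (S n w - S m w)\<^sup>2 \<partial>\<Omega>)"
proof -
  have [measurable]: "g \<in> borel_measurable \<Omega>"
    by (rule borel_measurable_depends_on_first[OF g(1)])
  have weighted_square: "integrable \<Omega> (\<lambda>w. g w * (S i w - S j w)\<^sup>2)" for i j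
    using g(2,3) by (intro integrable_weighted_square_increment) auto
  have "depends_on_first (l + c) (S m)"
    using depends_on_first_mono[OF depends_S] \<open>m \<le> l\<close> by simp
  then have "depends_on_first (l + c) (\<lambda>w. S l w - S m w)"
    by (rule depends_on_first_comp2[OF depends_S])
  then have cross_depends: "depends_on_first (l + c) (\<lambda>w. g w * (S l w - S m w))"
    by (rule depends_on_first_comp2[OF g(1)])
  have cross_bounded: "\<bar>g w * (S l w - S m w)\<bar> \<le> 1 * (2 * B)" for w
    unfolding abs_mult by (rule mult_mono) (use g(2,3) abs_S_diff_le in auto)
  have cross: "integrable \<Omega> (\<lambda>w. (S n w - S l w) * (g w * (S l w - S m w)))"
  proof (rule integrable_bounded[where C = "2 * B * (1 * (2 * B))"])
    show "\<bar>(S n w - S l w) * (g w * (S l w - S m w))\<bar> \<le> 2 * B * (1 * (2 * B))" for w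
      unfolding abs_mult[of "S n w - S l w"]
      by (rule mult_mono) (use abs_S_diff_le cross_bounded B_nonneg in auto)
  qed measurable
  have "(\<lambda>w. g w * (S n w - S m w)\<^sup>2) =
      (\<lambda>w. g w * (S l w - S m w)\<^sup>2 + 2 * ((S n w - S l w) * (g w * (S l w - S m w))) +
        g w * (S n w - S l w)\<^sup>2)"
    by (auto simp: power2_eq_square algebra_simps)
  then have "(\<integral>w. g w * (S n w - S m w)\<^sup>2 \<partial>\<Omega>) =
      (\<integral>w. g w * (S l w - S m w)\<^sup>2 \<partial>\<Omega>) + (\<integral>w. g w * (S n w - S l w)\<^sup>2 \<partial>\<Omega>)"
    using increment_orthogonal[OF \<open>l \<le> n\<close> cross_depends cross_bounded] weighted_square cross by simp
  moreover have "0 \<le> (\<integral>w. g w * (S n w - S l w)\<^sup>2 \<partial>\<Omega>)"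
    using g(2) by (intro integral_nonneg_AE) auto
  ultimately show ?thesis
    by simp
qed

definition first_exceedance :: "real \<Rightarrow> nat \<Rightarrow> nat \<Rightarrow> (nat \<Rightarrow> 'a) \<Rightarrow> bool" where
  "first_exceedance \<epsilon> m l w \<longleftrightarrow>
    \<epsilon> \<le> \<bar>S l w - S m w\<bar> \<and> (\<forall>l'\<in>{m..<l}. \<not> \<epsilon> \<le> \<bar>S l' w - S m w\<bar>)"

lemma measurable_first_exceedance [measurable]: "Measurable.pred \<Omega> (first_exceedance \<epsilon> m l)"
  unfolding first_exceedance_def by measurable

lemma depends_on_first_first_exceedance:
  assumes "m \<le> l"
  shows "depends_on_first (l + c) (first_exceedance \<epsilon> m l)"
proof (rule depends_on_firstI)
  fix w w' :: "nat \<Rightarrow> 'a"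
  assume same: "\<And>i. i < l + c \<Longrightarrow> w i = w' i"
  have "S l' w = S l' w'" if "l' \<le> l" for l'
    by (rule depends_on_firstD[OF depends_on_first_mono[OF depends_S[of l'], where m = "l + c"]])
       (use that same in auto)
  then show "first_exceedance \<epsilon> m l w = first_exceedance \<epsilon> m l w'"
    using assms by (simp add: first_exceedance_def)
qed

lemma sum_first_exceedance:
  "(\<Sum>l\<in>{m..n}. of_bool (first_exceedance \<epsilon> m l w) :: real) =
    indicator {w. \<exists>l\<in>{m..n}. \<epsilon> \<le> \<bar>S l w - S m w\<bar>} w"
  unfolding first_exceedance_def sum_first_occurrence by (simp add: indicator_def)

lemma maximal_inequality:
  assumes "m \<le> n" "0 < \<epsilon>"
  shows "\<epsilon>\<^sup>2 * prob {w. \<exists>l\<in>{m..n}. \<epsilon> \<le> \<bar>S l w - S m w\<bar>} \<le> (\<integral>w. (S n w - S m w)\<^sup>2 \<partial>\<Omega>)"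
proof -
  define E where "E = {w. \<exists>l\<in>{m..n}. \<epsilon> \<le> \<bar>S l w - S m w\<bar>}"
  define first where "first l w = (of_bool (first_exceedance \<epsilon> m l w) :: real)" for l w
  have "{w \<in> space \<Omega>. \<exists>l\<in>{m..n}. \<epsilon> \<le> \<bar>S l w - S m w\<bar>} \<in> sets \<Omega>"
    by measurable
  then have E_measurable [measurable]: "E \<in> sets \<Omega>"
    by (simp add: E_def)
  have first_measurable [measurable]: "first l \<in> borel_measurable \<Omega>" for l
    unfolding first_def by measurable
  have first_bounded: "\<bar>first l w\<bar> \<le> 1" for l w
    by (simp add: first_def)
  have indicator_E: "indicator E w = (\<Sum>l\<in>{m..n}. first l w)" for w
    by (simp add: E_def first_def sum_first_exceedance)
  have "prob E = (\<integral>w. indicator E w \<partial>\<Omega>)"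
    by (simp add: E_def)
  also have "\<dots> = (\<Sum>l\<in>{m..n}. \<integral>w. first l w \<partial>\<Omega>)"
    unfolding indicator_E
    by (rule Bochner_Integration.integral_sum)
       (rule integrable_bounded[OF first_measurable first_bounded])
  finally have "\<epsilon>\<^sup>2 * prob E = (\<Sum>l\<in>{m..n}. \<integral>w. \<epsilon>\<^sup>2 * first l w \<partial>\<Omega>)"
    by (simp add: sum_distrib_left)
  also have "\<dots> \<le> (\<Sum>l\<in>{m..n}. \<integral>w. first l w * (S l w - S m w)\<^sup>2 \<partial>\<Omega>)"
  proof (intro sum_mono integral_mono)
    show "\<epsilon>\<^sup>2 * first l w \<le> first l w * (S l w - S m w)\<^sup>2" for l w
      using power_mono[of \<epsilon> "\<bar>S l w - S m w\<bar>" 2] assms(2)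
      by (simp add: first_def first_exceedance_def)
  qed (use integrable_bounded[OF first_measurable first_bounded]
         integrable_weighted_square_increment[OF first_measurable first_bounded] in auto)
  also have "\<dots> \<le> (\<Sum>l\<in>{m..n}. \<integral>w. first l w * (S n w - S m w)\<^sup>2 \<partial>\<Omega>)"
    by (intro sum_mono integral_weighted_square_increment_mono)
       (auto simp: first_def intro: depends_on_first_comp[OF depends_on_first_first_exceedance])
  also have "\<dots> = (\<integral>w. indicator E w * (S n w - S m w)\<^sup>2 \<partial>\<Omega>)"
    using integrable_weighted_square_increment[OF first_measurable first_bounded]
    by (simp add: indicator_E sum_distrib_right Bochner_Integration.integral_sum)
  also have "\<dots> \<le> (\<integral>w. (S n w - S m w)\<^sup>2 \<partial>\<Omega>)"
  proof (rule integral_mono)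
    show "integrable \<Omega> (\<lambda>w. indicator E w * (S n w - S m w)\<^sup>2)"
      by (rule integrable_weighted_square_increment) auto
    show "integrable \<Omega> (\<lambda>w. (S n w - S m w)\<^sup>2)"
      using integrable_weighted_square_increment[of "\<lambda>_. 1"] by simp
  qed (simp split: split_indicator)
  finally show ?thesis
    by (simp add: E_def)
qed

lemma integral_square_S_mono: "m \<le> n \<Longrightarrow> (\<integral>w. (S m w)\<^sup>2 \<partial>\<Omega>) \<le> (\<integral>w. (S n w)\<^sup>2 \<partial>\<Omega>)"
  using integral_square_increment[of m n] integral_nonneg_AE[of "\<lambda>w. (S n w - S m w)\<^sup>2" \<Omega>] by simp

lemma integral_square_S_le: "(\<integral>w. (S n w)\<^sup>2 \<partial>\<Omega>) \<le> B\<^sup>2"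
  using integral_mono[of \<Omega> "\<lambda>w. (S n w)\<^sup>2" "\<lambda>_. B\<^sup>2"] square_S_le integrable_square_S prob_space
  by simp

lemma maximal_inequality_tail:
  assumes "0 < \<epsilon>" and L: "\<And>n. (\<integral>w. (S n w)\<^sup>2 \<partial>\<Omega>) \<le> L"
  shows "\<epsilon>\<^sup>2 * prob {w. \<exists>l\<ge>m. \<epsilon> \<le> \<bar>S l w - S m w\<bar>} \<le> L - (\<integral>w. (S m w)\<^sup>2 \<partial>\<Omega>)"
proof -
  define A where "A n = {w. \<exists>l\<in>{m..m + n}. \<epsilon> \<le> \<bar>S l w - S m w\<bar>}" for n
  have "{w \<in> space \<Omega>. \<exists>l\<in>{m..m + n}. \<epsilon> \<le> \<bar>S l w - S m w\<bar>} \<in> sets \<Omega>" for n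
    by measurable
  then have "A n \<in> sets \<Omega>" for n
    by (simp add: A_def)
  then have "(\<lambda>n. \<epsilon>\<^sup>2 * prob (A n)) \<longlonglongrightarrow> \<epsilon>\<^sup>2 * prob (\<Union>n. A n)"
    by (intro tendsto_mult_left finite_Lim_measure_incseq) (auto simp: A_def incseq_def)
  moreover have "\<epsilon>\<^sup>2 * prob (A n) \<le> L - (\<integral>w. (S m w)\<^sup>2 \<partial>\<Omega>)" for n
  proof -
    have "\<epsilon>\<^sup>2 * prob (A n) \<le> (\<integral>w. (S (m + n) w - S m w)\<^sup>2 \<partial>\<Omega>)"
      using maximal_inequality[of m "m + n" \<epsilon>] assms(1) by (simp add: A_def)
    then show ?thesis
      using integral_square_increment[of m "m + n"] L[of "m + n"] by simp
  qed
  ultimately have "\<epsilon>\<^sup>2 * prob (\<Union>n. A n) \<le> L - (\<integral>w. (S m w)\<^sup>2 \<partial>\<Omega>)"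
    by (intro LIMSEQ_le_const2) auto
  moreover have "(\<Union>n. A n) = {w. \<exists>l\<ge>m. \<epsilon> \<le> \<bar>S l w - S m w\<bar>}"
  proof
    show "{w. \<exists>l\<ge>m. \<epsilon> \<le> \<bar>S l w - S m w\<bar>} \<subseteq> (\<Union>n. A n)"
    proof
      fix w
      assume "w \<in> {w. \<exists>l\<ge>m. \<epsilon> \<le> \<bar>S l w - S m w\<bar>}"
      then obtain l where "m \<le> l" "\<epsilon> \<le> \<bar>S l w - S m w\<bar>"
        by blast
      then show "w \<in> (\<Union>n. A n)"
        by (auto simp: A_def intro!: exI[of _ "l - m"] bexI[of _ l])
    qed
  qed (auto simp: A_def)
  ultimately show ?thesis
    by simp
qed

lemma AE_eventually_close:
  assumes "0 < \<epsilon>"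
  shows "AE w in \<Omega>. \<exists>m. \<forall>l\<ge>m. \<bar>S l w - S m w\<bar> < \<epsilon>"
proof -
  define v where "v n = (\<integral>w. (S n w)\<^sup>2 \<partial>\<Omega>)" for n
  obtain L where v_tendsto: "v \<longlonglongrightarrow> L" and v_le: "\<And>n. v n \<le> L"
    using incseq_convergent[of v "B\<^sup>2"] integral_square_S_mono integral_square_S_le
    unfolding v_def incseq_def by blast
  define G where "G = {w. \<forall>m. \<exists>l\<ge>m. \<epsilon> \<le> \<bar>S l w - S m w\<bar>}"
  have "{w \<in> space \<Omega>. \<forall>m. \<exists>l\<ge>m. \<epsilon> \<le> \<bar>S l w - S m w\<bar>} \<in> sets \<Omega>"
    by measurable
  then have G_measurable: "G \<in> sets \<Omega>"
    by (simp add: G_def)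
  have "prob G \<le> (L - v m) / \<epsilon>\<^sup>2" for m
  proof -
    have "{w \<in> space \<Omega>. \<exists>l\<ge>m. \<epsilon> \<le> \<bar>S l w - S m w\<bar>} \<in> sets \<Omega>"
      by measurable
    then have "\<epsilon>\<^sup>2 * prob G \<le> \<epsilon>\<^sup>2 * prob {w. \<exists>l\<ge>m. \<epsilon> \<le> \<bar>S l w - S m w\<bar>}"
      by (intro mult_left_mono finite_measure_mono) (auto simp: G_def)
    also have "\<dots> \<le> L - v m"
      using maximal_inequality_tail[OF assms v_le[unfolded v_def], of m] by (simp add: v_def)
    finally show ?thesis
      using assms by (simp add: field_simps)
  qed
  moreover have "(\<lambda>m. (L - v m) / \<epsilon>\<^sup>2) \<longlonglongrightarrow> (L - L) / \<epsilon>\<^sup>2"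
    using assms by (intro tendsto_intros v_tendsto) simp
  ultimately have "prob G \<le> 0"
    by (intro LIMSEQ_le_const) auto
  then have "G \<in> null_sets \<Omega>"
    using G_measurable by (simp add: measure_le_0_iff emeasure_eq_measure null_sets_def)
  then show ?thesis
    by (rule AE_I') (auto simp: G_def not_less)
qed

lemma AE_convergent: "AE w in \<Omega>. convergent (\<lambda>n. S n w)"
proof -
  have "AE w in \<Omega>. \<forall>k::nat. \<exists>m. \<forall>l\<ge>m. \<bar>S l w - S m w\<bar> < 1 / Suc k"
    by (subst AE_all_countable) (auto intro: AE_eventually_close)
  then show ?thesis
  proof (rule AE_mp, intro AE_I2 impI)
    fix w
    assume close: "\<forall>k::nat. \<exists>m. \<forall>l\<ge>m. \<bar>S l w - S m w\<bar> < 1 / Suc k"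
    have "Cauchy (\<lambda>n. S n w)"
    proof (rule metric_CauchyI)
      fix e :: real
      assume "0 < e"
      then obtain k :: nat where k: "1 / Suc k < e / 2"
        by (metis half_gt_zero nat_approx_posE)
      obtain m where m: "\<forall>l\<ge>m. \<bar>S l w - S m w\<bar> < 1 / Suc k"
        using close by blast
      have "dist (S i w) (S j w) < e" if "m \<le> i" "m \<le> j" for i j
      proof -
        have "\<bar>S i w - S m w\<bar> < 1 / Suc k" "\<bar>S j w - S m w\<bar> < 1 / Suc k"
          using m that by auto
        then show ?thesis
          using k by (simp add: dist_real_def)
      qed
      then show "\<exists>M. \<forall>i\<ge>M. \<forall>j\<ge>M. dist (S i w) (S j w) < e"
        by blast
    qed
    then show "convergent (\<lambda>n. S n w)"
      by (simp add: Cauchy_convergent_iff)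
  qed
qed

lemma integral_square_increment_le_decrement:
  assumes "\<And>l w. (S (Suc l) w - S l w)\<^sup>2 \<le> C l w - C (Suc l) w" "\<And>l. integrable \<Omega> (C l)"
  shows "(\<integral>w. (S n w - S 0 w)\<^sup>2 \<partial>\<Omega>) \<le> (\<integral>w. C 0 w \<partial>\<Omega>) - (\<integral>w. C n w \<partial>\<Omega>)"
proof -
  have "(\<integral>w. (S n w - S 0 w)\<^sup>2 \<partial>\<Omega>) = (\<Sum>l<n. \<integral>w. (S (Suc l) w - S l w)\<^sup>2 \<partial>\<Omega>)"
    using sum_lessThan_telescope[of "\<lambda>l. \<integral>w. (S l w)\<^sup>2 \<partial>\<Omega>" n]
    by (simp add: integral_square_increment)
  also have "\<dots> \<le> (\<Sum>l<n. (\<integral>w. C l w \<partial>\<Omega>) - (\<integral>w. C (Suc l) w \<partial>\<Omega>))"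
  proof (intro sum_mono)
    fix l
    have "(\<integral>w. (S (Suc l) w - S l w)\<^sup>2 \<partial>\<Omega>) \<le> (\<integral>w. C l w - C (Suc l) w \<partial>\<Omega>)"
      using assms integrable_weighted_square_increment[of "\<lambda>_. 1" "Suc l" l]
      by (intro integral_mono) auto
    then show "(\<integral>w. (S (Suc l) w - S l w)\<^sup>2 \<partial>\<Omega>) \<le> (\<integral>w. C l w \<partial>\<Omega>) - (\<integral>w. C (Suc l) w \<partial>\<Omega>)"
      using assms(2) by simp
  qed
  also have "\<dots> = (\<integral>w. C 0 w \<partial>\<Omega>) - (\<integral>w. C n w \<partial>\<Omega>)"
    by (rule sum_lessThan_telescope')
  finally show ?thesis .
qed

end

section \<open>Type counts of the embedded Yule chain\<close>

lemma typs_extend: "i \<le> n + 1 \<Longrightarrow> typs w (n + d) i = typs w n i"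
  by (induction d) auto

lemma typs_unborn: "i = 0 \<or> n + 1 < i \<Longrightarrow> typs w n i = 1"
  by (induction n) auto

lemma typs_eq_yule_type: "1 \<le> i \<Longrightarrow> i \<le> n + 1 \<Longrightarrow> typs w n i = yule_type w i"
  using typs_extend[of i "i - 1" w "n - (i - 1)"] typs_extend[of i "i - 1" w 1]
  by (simp add: yule_type_def)

lemma yule_type_1 [simp]: "yule_type w (Suc 0) = 1"
  by (simp add: yule_type_def)

lemma yule_type_Suc_Suc: "yule_type w (Suc (Suc n)) =
    (if snd (w n) then n + 2
     else if 1 \<le> fst (w n) \<and> fst (w n) \<le> n + 1 then yule_type w (fst (w n)) else 1)"
  using typs_extend[of "n + 2" "Suc n" w 1] typs_eq_yule_type[of "fst (w n)" n w]
    typs_unborn[of "fst (w n)" n w]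
  by (auto simp: yule_type_def)

lemma yule_type_bounds: "1 \<le> i \<Longrightarrow> 1 \<le> yule_type w i \<and> yule_type w i \<le> i"
proof (induction i rule: less_induct)
  case (less i)
  then consider "i = 1" | n where "i = Suc (Suc n)"
    by (cases i; cases "i - 1") auto
  then show ?case
  proof cases
    case (2 n)
    then show ?thesis
      using less.IH[of "fst (w n)"] by (auto simp: yule_type_Suc_Suc)
  qed simp
qed

lemma yule_type_depends_on_first: "1 \<le> i \<Longrightarrow> depends_on_first (i - 1) (\<lambda>w. yule_type w i)"
proof (induction i rule: less_induct)
  case (less i)
  then consider "i = 1" | n where "i = Suc (Suc n)"
    by (cases i; cases "i - 1") auto
  then show ?case
  proof cases
    case 1
    then show ?thesis
      by (simp add: depends_on_first_def)
  next
    case (2 n)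
    show ?thesis
    proof (rule depends_on_firstI)
      fix w w' :: "nat \<Rightarrow> nat \<times> bool"
      assume same: "\<And>l. l < i - 1 \<Longrightarrow> w l = w' l"
      have "yule_type w q = yule_type w' q" if "1 \<le> q" "q \<le> n + 1" for q
        by (rule depends_on_firstD[OF less.IH[of q]]) (use that same 2 in auto)
      then show "yule_type w i = yule_type w' i"
        using same[of n] 2 by (simp add: yule_type_Suc_Suc)
    qed
  qed
qed

definition type_count :: "nat \<Rightarrow> nat \<Rightarrow> (nat \<Rightarrow> nat \<times> bool) \<Rightarrow> nat" where
  "type_count a m w = card {i \<in> {1..m}. yule_type w i \<le> a}"

lemma type_count_Suc:
  "type_count a (Suc m) w = type_count a m w + of_bool (yule_type w (Suc m) \<le> a)"
proof -
  have "{i \<in> {1..Suc m}. yule_type w i \<le> a} =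
      (if yule_type w (Suc m) \<le> a then insert (Suc m) else id) {i \<in> {1..m}. yule_type w i \<le> a}"
    by (auto simp: le_Suc_eq)
  then show ?thesis
    by (simp add: type_count_def)
qed

lemma type_count_full: "m \<le> a \<Longrightarrow> type_count a m w = m"
proof -
  assume "m \<le> a"
  then have "{i \<in> {1..m}. yule_type w i \<le> a} = {1..m}"
    using yule_type_bounds[of _ w] by fastforce
  then show ?thesis
    by (simp add: type_count_def)
qed

lemma type_count_mono: "a \<le> b \<Longrightarrow> type_count a m w \<le> type_count b m w"
  unfolding type_count_def by (rule card_mono) auto

lemma type_count_pos: "1 \<le> a \<Longrightarrow> 1 \<le> m \<Longrightarrow> 1 \<le> type_count a m w"
proof -
  assume "1 \<le> a" "1 \<le> m"
  then have "1 \<in> {i \<in> {1..m}. yule_type w i \<le> a}"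
    by simp
  then have "0 < card {i \<in> {1..m}. yule_type w i \<le> a}"
    by (subst card_gt_0_iff) auto
  then show ?thesis
    by (simp add: type_count_def)
qed

lemma type_count_depends_on_first: "depends_on_first (m - 1) (type_count a m)"
proof (induction m)
  case (Suc m)
  show ?case
  proof (rule depends_on_firstI)
    fix w w' :: "nat \<Rightarrow> nat \<times> bool"
    assume same: "\<And>i. i < Suc m - 1 \<Longrightarrow> w i = w' i"
    have "type_count a m w = type_count a m w'"
      by (rule depends_on_firstD[OF Suc.IH]) (use same in auto)
    moreover have "yule_type w (Suc m) = yule_type w' (Suc m)"
      by (rule depends_on_firstD[OF yule_type_depends_on_first]) (use same in auto)
    ultimately show "type_count a (Suc m) w = type_count a (Suc m) w'"
      by (simp add: type_count_Suc)
  qed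
qed (simp add: type_count_def depends_on_first_def)

lemma card_types_in_range: "card {i \<in> {1..N}. yule_type w i \<in> {1..a}} = type_count a N w"
proof -
  have "{i \<in> {1..N}. yule_type w i \<in> {1..a}} = {i \<in> {1..N}. yule_type w i \<le> a}"
    using yule_type_bounds[of _ w] by fastforce
  then show ?thesis
    by (simp add: type_count_def)
qed

lemma Xf_eq: "Xf k N w = real (type_count k N w) / real N"
  by (simp only: Xf_def card_types_in_range)

lemma Vf_eq:
  assumes "2 \<le> j" "1 \<le> N"
  shows "Vf j N w = 1 - real (type_count (j - 1) N w) / real (type_count j N w)"
proof -
  have split: "{i \<in> {1..N}. yule_type w i \<le> j} =
      {i \<in> {1..N}. yule_type w i \<le> j - 1} \<union> {i \<in> {1..N}. yule_type w i = j}"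
    by auto
  have "type_count j N w =
      card ({i \<in> {1..N}. yule_type w i \<le> j - 1} \<union> {i \<in> {1..N}. yule_type w i = j})"
    unfolding type_count_def split ..
  also have "\<dots> = type_count (j - 1) N w + card {i \<in> {1..N}. yule_type w i = j}"
    unfolding type_count_def by (rule card_Un_disjoint) (use assms in auto)
  finally have count_j:
    "type_count j N w = type_count (j - 1) N w + card {i \<in> {1..N}. yule_type w i = j}" .
  have "Vf j N w = real (card {i \<in> {1..N}. yule_type w i = j}) / real (type_count j N w)"
    by (simp only: Vf_def card_types_in_range)
  moreover have "1 \<le> type_count j N w"
    using type_count_pos assms by simp
  ultimately show ?thesis
    unfolding count_j by (simp add: field_simps)
qed

section \<open>The urn martingale\<close>

definition birth_pmf :: "real \<Rightarrow> nat \<Rightarrow> (nat \<times> bool) pmf" where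
  "birth_pmf r n = pair_pmf (pmf_of_set {1..Suc n}) (bernoulli_pmf r)"

lemma yule_space_eq: "yule_space r = PiM UNIV (\<lambda>n. measure_pmf (birth_pmf r n))"
  by (simp add: yule_space_def birth_pmf_def)

lemma integral_birth_pmf:
  fixes f :: "nat \<times> bool \<Rightarrow> real"
  assumes "0 \<le> r" "r \<le> 1"
  shows "(\<integral>x. f x \<partial>birth_pmf r n) =
    (\<Sum>q = 1..Suc n. r * f (q, True) + (1 - r) * f (q, False)) / Suc n"
proof -
  have "(\<integral>x. f x \<partial>birth_pmf r n) = (\<Sum>x\<in>{1..Suc n} \<times> UNIV. pmf (birth_pmf r n) x * f x)"
    by (subst integral_measure_pmf[of "{1..Suc n} \<times> UNIV"]) (auto simp: birth_pmf_def)
  also have "\<dots> = (\<Sum>q = 1..Suc n. \<Sum>fresh\<in>UNIV. pmf (birth_pmf r n) (q, fresh) * f (q, fresh))"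
    by (simp add: sum.cartesian_product)
  also have "\<dots> = (\<Sum>q = 1..Suc n. (r * f (q, True) + (1 - r) * f (q, False)) / Suc n)"
    by (intro sum.cong) (auto simp: birth_pmf_def pmf_pair UNIV_bool assms
        add_divide_distrib diff_divide_distrib algebra_simps)
  finally show ?thesis
    by (simp only: sum_divide_distrib)
qed

lemma sum_urn_ratio:
  assumes "finite I" "A \<subseteq> B" "B \<subseteq> I" "B \<noteq> {}"
  shows "(\<Sum>q\<in>I. (real (card A) + of_bool (q \<in> A)) / (real (card B) + of_bool (q \<in> B))) =
    real (card I) * (card A / card B)"
proof -
  define a b where "a = real (card A)" and "b = real (card B)"
  have finite: "finite A" "finite B"
    using assms finite_subset by metis+
  have "0 < b"
    using assms finite card_mono card_gt_0_iff by (auto simp: a_def b_def)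
  have "(\<Sum>q\<in>I. (a + of_bool (q \<in> A)) / (b + of_bool (q \<in> B))) =
      (\<Sum>q\<in>I - B. (a + of_bool (q \<in> A)) / (b + of_bool (q \<in> B))) +
      (\<Sum>q\<in>B - A. (a + of_bool (q \<in> A)) / (b + of_bool (q \<in> B))) +
      (\<Sum>q\<in>A. (a + of_bool (q \<in> A)) / (b + of_bool (q \<in> B)))"
    by (simp only: sum.subset_diff[OF \<open>B \<subseteq> I\<close> \<open>finite I\<close>]
        sum.subset_diff[OF \<open>A \<subseteq> B\<close> \<open>finite B\<close>] add.assoc)
  also have "\<dots> = (\<Sum>q\<in>I - B. a / b) + (\<Sum>q\<in>B - A. a / (b + 1)) + (\<Sum>q\<in>A. (a + 1) / (b + 1))"
    using \<open>A \<subseteq> B\<close> by (intro arg_cong2[where f = "(+)"] sum.cong) auto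
  also have "\<dots> = (card I - b) * (a / b) + (b - a) * (a / (b + 1)) + a * ((a + 1) / (b + 1))"
    using assms finite card_mono[OF \<open>finite I\<close> \<open>B \<subseteq> I\<close>] card_mono[OF \<open>finite B\<close> \<open>A \<subseteq> B\<close>]
    by (simp add: a_def b_def card_Diff_subset of_nat_diff)
  also have "\<dots> = card I * (a / b)"
  proof -
    have "(b - a) * (a / (b + 1)) + a * ((a + 1) / (b + 1)) = a"
      using \<open>0 < b\<close> by (simp add: divide_simps) (simp add: algebra_simps)
    moreover have "(card I - b) * (a / b) + a = card I * (a / b)"
      using \<open>0 < b\<close> by (simp add: field_simps)
    ultimately show ?thesis
      by (simp only: add.assoc)
  qed
  finally show ?thesis
    by (simp add: a_def b_def)
qed

lemma type_count_birth:
  assumes "a \<le> Suc n" "q \<in> {1..Suc n}"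
  shows "type_count a (Suc (Suc n)) (w(n := (q, fresh))) =
    type_count a (Suc n) w + of_bool (\<not> fresh \<and> yule_type w q \<le> a)"
proof -
  have "type_count a (Suc n) (w(n := x)) = type_count a (Suc n) w" for x
    by (rule depends_on_first_update[OF type_count_depends_on_first]) simp
  moreover have "yule_type (w(n := x)) q = yule_type w q" for x
    by (rule depends_on_first_update[OF yule_type_depends_on_first]) (use assms in auto)
  ultimately show ?thesis
    using assms by (simp add: type_count_Suc[of a "Suc n"] yule_type_Suc_Suc)
qed

definition type_ratio :: "nat \<Rightarrow> nat \<Rightarrow> nat \<Rightarrow> (nat \<Rightarrow> nat \<times> bool) \<Rightarrow> real" where
  "type_ratio a b m w = real (type_count a m w) / real (type_count b m w)"

lemma type_ratio_average:
  assumes "1 \<le> a" "a \<le> b" "b \<le> Suc n" "0 \<le> r" "r \<le> 1"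
  shows "(\<integral>x. type_ratio a b (Suc (Suc n)) (w(n := x)) \<partial>birth_pmf r n) = type_ratio a b (Suc n) w"
proof -
  define A B where "A = {q \<in> {1..Suc n}. yule_type w q \<le> a}"
    and "B = {q \<in> {1..Suc n}. yule_type w q \<le> b}"
  have counts: "type_count a (Suc n) w = card A" "type_count b (Suc n) w = card B"
    by (simp_all add: A_def B_def type_count_def)
  have urn: "(\<Sum>q = 1..Suc n. (real (card A) + of_bool (q \<in> A)) / (real (card B) + of_bool (q \<in> B)))
      = real (Suc n) * (card A / card B)"
    using assms by (subst sum_urn_ratio) (auto simp: A_def B_def)
  have "(\<integral>x. type_ratio a b (Suc (Suc n)) (w(n := x)) \<partial>birth_pmf r n) =
      (\<Sum>q = 1..Suc n. r * (real (card A) / card B) +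
        (1 - r) * ((real (card A) + of_bool (q \<in> A)) / (real (card B) + of_bool (q \<in> B)))) / Suc n"
    unfolding integral_birth_pmf[OF assms(4,5)] using assms
    by (intro arg_cong2[where f = "(/)"] sum.cong refl)
       (simp_all add: type_ratio_def type_count_birth counts A_def B_def)
  also have "\<dots> = (r * (real (Suc n) * (card A / card B)) +
      (1 - r) * (real (Suc n) * (card A / card B))) / Suc n"
    by (simp only: sum.distrib sum_distrib_left[symmetric] urn sum_constant
        card_atLeastAtMost diff_Suc_1)
  also have "\<dots> = real (card A) / card B"
    by (simp only: distrib_right[symmetric]) simp
  finally show ?thesis
    by (simp add: type_ratio_def counts)
qed

lemma square_ratio_step_le:
  fixes a b d :: real
  assumes "0 \<le> a" "a \<le> b" "1 \<le> b" "0 \<le> d" "d \<le> 1"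
  shows "((a + d) / (b + 1) - a / b)\<^sup>2 \<le> 1 / b - 1 / (b + 1)"
proof -
  have "0 \<le> d * b" "d * b \<le> b"
    using assms by (simp_all add: mult_left_le_one_le)
  then have "\<bar>d * b - a\<bar> \<le> b"
    using assms unfolding abs_le_iff by linarith
  then have "(d * b - a)\<^sup>2 \<le> b\<^sup>2"
    using power_mono[of "\<bar>d * b - a\<bar>" b 2] by simp
  also have "\<dots> \<le> b * (b + 1)"
    using assms by (simp add: power2_eq_square)
  finally have numerator: "(d * b - a)\<^sup>2 \<le> b * (b + 1)" .
  have "((a + d) / (b + 1) - a / b)\<^sup>2 = (d * b - a)\<^sup>2 / (b * (b + 1))\<^sup>2"
    using assms by (simp add: power_divide field_simps)
  also have "\<dots> \<le> (b * (b + 1)) / (b * (b + 1))\<^sup>2"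
    using numerator by (rule divide_right_mono) simp
  also have "\<dots> = 1 / (b * (b + 1))"
    using assms by (simp add: power2_eq_square)
  also have "\<dots> = 1 / b - 1 / (b + 1)"
    using assms by (simp add: field_simps)
  finally show ?thesis .
qed

lemma square_type_ratio_increment_le:
  assumes "1 \<le> k" "k \<le> N" "N \<le> M"
  shows "(type_ratio k N (Suc M) w - type_ratio k N M w)\<^sup>2 \<le>
    1 / type_count N M w - 1 / type_count N (Suc M) w"
proof (cases "yule_type w (Suc M) \<le> N")
  case True
  have "1 \<le> type_count N M w" "type_count k M w \<le> type_count N M w"
    using type_count_pos[of N M w] type_count_mono[of k N M w] assms by auto
  moreover have "type_ratio k N (Suc M) w =
      (real (type_count k M w) + of_bool (yule_type w (Suc M) \<le> k)) / (real (type_count N M w) + 1)"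
    "real (type_count N (Suc M) w) = real (type_count N M w) + 1"
    using True by (simp_all add: type_ratio_def type_count_Suc)
  ultimately show ?thesis
    unfolding type_ratio_def[of k N M] by (simp only:) (rule square_ratio_step_le, auto)
next
  case False
  then show ?thesis
    using assms by (simp add: type_ratio_def type_count_Suc)
qed

lemma type_ratio_martingale:
  assumes "1 \<le> a" "a \<le> b" "0 \<le> r" "r \<le> 1"
  shows "pmf_sequence_martingale (birth_pmf r) (\<lambda>n. type_ratio a b (n + b)) (b - 1) 1"
proof
  fix n w
  show "depends_on_first (n + (b - 1)) (type_ratio a b (n + b))"
    using assms depends_on_first_comp2[OF type_count_depends_on_first type_count_depends_on_first]
    by (simp add: type_ratio_def[abs_def])
  show "\<bar>type_ratio a b (n + b) w\<bar> \<le> 1"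
    using type_count_mono[of a b "n + b" w] type_count_pos[of b "n + b" w] assms
    by (simp add: type_ratio_def)
  have "n + b = Suc (n + b - 1)" "n + (b - 1) = n + b - 1"
    using assms by auto
  then show "(\<integral>x. type_ratio a b (Suc n + b) (w(n + (b - 1) := x)) \<partial>birth_pmf r (n + (b - 1))) =
      type_ratio a b (n + b) w"
    using type_ratio_average[of a b "n + b - 1" r w] assms by simp
qed

lemma AE_type_ratio_tendsto_Wf:
  assumes "2 \<le> j" "0 \<le> r" "r \<le> 1"
  shows "AE w in yule_space r. (\<lambda>M. type_ratio (j - 1) j M w) \<longlonglongrightarrow> 1 - Wf j w"
proof -
  interpret pmf_sequence_martingale "birth_pmf r" "\<lambda>n. type_ratio (j - 1) j (n + j)" "j - 1" 1
    by (rule type_ratio_martingale) (use assms in auto)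
  show ?thesis
    unfolding yule_space_eq
  proof (rule AE_mp[OF AE_convergent], intro AE_I2 impI)
    fix w
    assume "convergent (\<lambda>n. type_ratio (j - 1) j (n + j) w)"
    then obtain L where "(\<lambda>n. type_ratio (j - 1) j (n + j) w) \<longlonglongrightarrow> L"
      by (auto simp: convergent_def)
    then have L: "(\<lambda>M. type_ratio (j - 1) j M w) \<longlonglongrightarrow> L"
      by (rule LIMSEQ_offset)
    have "\<forall>\<^sub>F M in sequentially. 1 - type_ratio (j - 1) j M w = Vf j M w"
      using eventually_ge_at_top[of 1]
      by eventually_elim (use assms in \<open>simp add: Vf_eq type_ratio_def\<close>)
    then have "(\<lambda>M. Vf j M w) \<longlonglongrightarrow> 1 - L"
      by (rule Lim_transform_eventually[OF tendsto_diff[OF tendsto_const L]])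
    then have "Wf j w = 1 - L"
      unfolding Wf_def by (rule limI)
    then show "(\<lambda>M. type_ratio (j - 1) j M w) \<longlonglongrightarrow> 1 - Wf j w"
      using L by simp
  qed
qed

lemma prod_type_ratio:
  assumes "1 \<le> k" "k \<le> N" "1 \<le> M"
  shows "(\<Prod>j = k + 1..N. type_ratio (j - 1) j M w) = type_ratio k N M w"
  using assms(2)
proof (induction N rule: dec_induct)
  case base
  then show ?case
    using type_count_pos[of k M w] assms by (simp add: type_ratio_def)
next
  case (step N)
  then have "{k + 1..Suc N} = insert (Suc N) {k + 1..N}"
    by auto
  then show ?case
    using step type_count_pos[of N M w] assms by (simp add: type_ratio_def)
qed

lemma AE_type_ratio_tendsto_Yf:
  assumes "1 \<le> k" "k \<le> N" "0 \<le> r" "r \<le> 1"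
  shows "AE w in yule_space r. (\<lambda>M. type_ratio k N M w) \<longlonglongrightarrow> Yf k N w"
proof -
  have "AE w in yule_space r. \<forall>j\<in>{k + 1..N}. (\<lambda>M. type_ratio (j - 1) j M w) \<longlonglongrightarrow> 1 - Wf j w"
    using AE_type_ratio_tendsto_Wf assms by (subst AE_ball_countable) auto
  then show ?thesis
  proof (rule AE_mp, intro AE_I2 impI)
    fix w
    assume "\<forall>j\<in>{k + 1..N}. (\<lambda>M. type_ratio (j - 1) j M w) \<longlonglongrightarrow> 1 - Wf j w"
    then have "(\<lambda>M. \<Prod>j = k + 1..N. type_ratio (j - 1) j M w) \<longlonglongrightarrow> Yf k N w"
      unfolding Yf_def by (intro tendsto_prod) auto
    moreover have
      "\<forall>\<^sub>F M in sequentially. (\<Prod>j = k + 1..N. type_ratio (j - 1) j M w) = type_ratio k N M w"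
      using eventually_ge_at_top[of 1] by eventually_elim (rule prod_type_ratio[OF assms(1,2)])
    ultimately show "(\<lambda>M. type_ratio k N M w) \<longlonglongrightarrow> Yf k N w"
      by (rule Lim_transform_eventually)
  qed
qed

lemma Xf_eq_type_ratio: "k \<le> N \<Longrightarrow> Xf k N w = type_ratio k N N w"
  by (simp add: Xf_eq type_ratio_def type_count_full)

lemma borel_measurable_type_ratio [measurable]: "type_ratio a b m \<in> borel_measurable (yule_space r)"
proof -
  interpret pmf_sequence_space "birth_pmf r" .
  show ?thesis
    unfolding yule_space_eq type_ratio_def[abs_def]
    by (rule borel_measurable_depends_on_first[OF depends_on_first_comp2[OF
          type_count_depends_on_first type_count_depends_on_first]])
qed

lemma nn_integral_square_Xf_deviation_le:
  assumes "1 \<le> k" "k \<le> N" "0 \<le> r" "r \<le> 1"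
  shows "(\<integral>\<^sup>+w. ennreal ((Xf k N w - type_ratio k N (n + N) w)\<^sup>2) \<partial>yule_space r) \<le> ennreal (1 / N)"
proof -
  interpret pmf_sequence_martingale "birth_pmf r" "\<lambda>n. type_ratio k N (n + N)" "N - 1" 1
    by (rule type_ratio_martingale) (use assms in auto)
  define C where "C l w = 1 / real (type_count N (l + N) w)" for l w
  have C_bounds: "0 \<le> C l w" "C l w \<le> 1" for l w
    using type_count_pos[of N "l + N" w] assms by (auto simp: C_def)
  have "depends_on_first (l + N - 1) (C l)" for l
    unfolding C_def[abs_def] by (rule depends_on_first_comp[OF type_count_depends_on_first])
  then have C_integrable: "integrable \<Omega> (C l)" for l
    using C_bounds by (intro integrable_bounded[where C = 1] borel_measurable_depends_on_first) auto
  have "(\<integral>w. (type_ratio k N (n + N) w - type_ratio k N (0 + N) w)\<^sup>2 \<partial>\<Omega>) \<le>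
      (\<integral>w. C 0 w \<partial>\<Omega>) - (\<integral>w. C n w \<partial>\<Omega>)"
    using square_type_ratio_increment_le assms
    by (intro integral_square_increment_le_decrement C_integrable) (simp add: C_def)
  also have "\<dots> \<le> 1 / N"
  proof -
    have "(\<integral>w. C 0 w \<partial>\<Omega>) = 1 / N"
      using prob_space by (simp add: C_def type_count_full)
    moreover have "0 \<le> (\<integral>w. C n w \<partial>\<Omega>)"
      using C_bounds by (intro integral_nonneg_AE) auto
    ultimately show ?thesis
      by simp
  qed
  finally have "(\<integral>w. (type_ratio k N N w - type_ratio k N (n + N) w)\<^sup>2 \<partial>\<Omega>) \<le> 1 / N"
    by (simp add: power2_commute)
  moreover have "integrable \<Omega> (\<lambda>w. (type_ratio k N N w - type_ratio k N (n + N) w)\<^sup>2)"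
    using integrable_weighted_square_increment[of "\<lambda>_. 1" 0 n] by simp
  ultimately show ?thesis
    using assms by (simp add: yule_space_eq Xf_eq_type_ratio nn_integral_eq_integral ennreal_leI)
qed

lemma nn_integral_le_of_AE_tendsto:
  fixes f :: "nat \<Rightarrow> 'a \<Rightarrow> real"
  assumes "AE x in M. (\<lambda>n. f n x) \<longlonglongrightarrow> g x" "\<And>n. f n \<in> borel_measurable M"
    and "\<And>n. (\<integral>\<^sup>+x. ennreal (f n x) \<partial>M) \<le> C"
  shows "(\<integral>\<^sup>+x. ennreal (g x) \<partial>M) \<le> C"
proof -
  have "(\<integral>\<^sup>+x. ennreal (g x) \<partial>M) = (\<integral>\<^sup>+x. liminf (\<lambda>n. ennreal (f n x)) \<partial>M)"
  proof (intro nn_integral_cong_AE, rule AE_mp[OF assms(1)], intro AE_I2 impI)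
    fix x
    assume "(\<lambda>n. f n x) \<longlonglongrightarrow> g x"
    then show "ennreal (g x) = liminf (\<lambda>n. ennreal (f n x))"
      by (intro lim_imp_Liminf[symmetric] tendsto_ennrealI) auto
  qed
  also have "\<dots> \<le> liminf (\<lambda>n. \<integral>\<^sup>+x. ennreal (f n x) \<partial>M)"
    using assms(2) by (intro nn_integral_liminf) measurable
  also have "\<dots> \<le> C"
    using assms(3) by (intro Liminf_le) auto
  finally show ?thesis .
qed

theorem lemma3p5:
  fixes r :: real and N k :: nat
  assumes "0 < r" and "r < 1" and "1 \<le> N" and "1 \<le> k" and "k \<le> N"
  shows "(\<integral>\<^sup>+ \<omega>. ennreal ((Xf k N \<omega> - Yf k N \<omega>)\<^sup>2) \<partial>yule_space r) \<le> ennreal (3 / real N)"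
proof -
  have "AE w in yule_space r.
      (\<lambda>n. (Xf k N w - type_ratio k N (n + N) w)\<^sup>2) \<longlonglongrightarrow> (Xf k N w - Yf k N w)\<^sup>2"
    using AE_type_ratio_tendsto_Yf[of k N r] assms
    by (auto elim!: AE_mp intro!: tendsto_intros LIMSEQ_ignore_initial_segment)
  moreover have
    "(\<lambda>w. (Xf k N w - type_ratio k N (n + N) w)\<^sup>2) \<in> borel_measurable (yule_space r)" for n
    using assms by (simp add: Xf_eq_type_ratio)
  moreover have
    "(\<integral>\<^sup>+w. ennreal ((Xf k N w - type_ratio k N (n + N) w)\<^sup>2) \<partial>yule_space r) \<le> ennreal (1 / N)"
    for n
    using nn_integral_square_Xf_deviation_le assms by simp
  ultimately have "(\<integral>\<^sup>+w. ennreal ((Xf k N w - Yf k N w)\<^sup>2) \<partial>yule_space r) \<le> ennreal (1 / N)"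
    by (rule nn_integral_le_of_AE_tendsto)
  also have "\<dots> \<le> ennreal (3 / real N)"
    by (intro ennreal_leI divide_right_mono) auto
  finally show ?thesis .
qed

end
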